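(* Let $K$ be a field of characteristic $\neq 2$, $n\ge1$, and let $\mathcal C$ be any EACP over $K$. Then $\mathcal C$ is not a division algebra, i.e. there exist $a,b\in\mathcal C$ with $a\neq0$ such that the equation $ax=b$ has no solution $x\in\mathcal C$.
   Context: An EACP over a field $K$ (characteristic $\neq 2$) is a $K$-algebra $\mathcal C$ with a basis $\{h_1,\dots,h_n,r\}$ (called a natural basis) whose multiplication is determined by bilinearity from $$h_ir=rh_i=\tfrac12\Big(\sum_{j=1}^n a_{ij}h_j+b_ir\Big),\qquad h_ih_j=0\ (i,j=1,\dots,n),\qquad rr=0,$$ for some constants $a_{ij},b_i\in K$. An algebra $\mathcal A$ is a division algebra if for all $a,b\in\mathcal A$ with $a\neq0$ the equations $ax=b$ and $xa=b$ are solvable in $\mathcal A$. *)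

theory Defs
  imports Main
begin

text \<open>Coordinate model of an EACP of dimension n+1 over a field 'a.
  An element is a coordinate function u :: nat => 'a supported on {0..n};
  coordinate i (i < n) is the coefficient of h_(i+1), coordinate n is the
  coefficient of r.  The structure constants a_ij, b_i are given (0-based)
  by A :: nat => nat => 'a and B :: nat => 'a.\<close>

definition eacp_carrier :: "nat \<Rightarrow> (nat \<Rightarrow> 'a::zero) set" where
  "eacp_carrier n = {u. \<forall>m>n. u m = 0}"

text \<open>Product of basis vectors e_k * e_l as a coordinate vector:
  h_i r = r h_i = 1/2 (sum_j a_ij h_j + b_i r), h_i h_j = 0, r r = 0.\<close>
definition eacp_basis_prod ::
  "nat \<Rightarrow> (nat \<Rightarrow> nat \<Rightarrow> 'a::field) \<Rightarrow> (nat \<Rightarrow> 'a) \<Rightarrow> nat \<Rightarrow> nat \<Rightarrow> nat \<Rightarrow> 'a" where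
  "eacp_basis_prod n A B k l =
     (if k < n \<and> l = n then
        (\<lambda>m. if m < n then A k m / 2 else if m = n then B k / 2 else 0)
      else if k = n \<and> l < n then
        (\<lambda>m. if m < n then A l m / 2 else if m = n then B l / 2 else 0)
      else (\<lambda>m. 0))"

definition eacp_mult ::
  "nat \<Rightarrow> (nat \<Rightarrow> nat \<Rightarrow> 'a::field) \<Rightarrow> (nat \<Rightarrow> 'a) \<Rightarrow> (nat \<Rightarrow> 'a) \<Rightarrow> (nat \<Rightarrow> 'a) \<Rightarrow> (nat \<Rightarrow> 'a)" where
  "eacp_mult n A B u v =
     (\<lambda>m. \<Sum>k\<le>n. \<Sum>l\<le>n. u k * v l * eacp_basis_prod n A B k l m)"

end

theory Submission
  imports Defs
begin

text \<open>Left multiplication by a basis vector \<open>h\<^sub>k\<close> kills every \<open>h\<^sub>j\<close> and sends \<open>r\<close> to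
  the fixed vector \<open>h\<^sub>k r\<close>, so its image is at most one-dimensional. Since the algebra
  has dimension \<open>n + 1 \<ge> 2\<close>, some \<open>b\<close> lies outside this image and \<open>h\<^sub>k x = b\<close> is
  unsolvable.\<close>

definition unit_coord :: "nat \<Rightarrow> nat \<Rightarrow> 'a::zero_neq_one" where
  "unit_coord k = (\<lambda>m. if m = k then 1 else 0)"

lemma unit_coord_in_eacp_carrier: "k \<le> n \<Longrightarrow> unit_coord k \<in> eacp_carrier n"
  by (auto simp: unit_coord_def eacp_carrier_def)

lemma unit_coord_nonzero: "unit_coord k \<noteq> (\<lambda>_. 0)"
  by (auto simp: unit_coord_def fun_eq_iff)

lemma eacp_mult_unit_coord_left:
  assumes "k < n"
  shows "eacp_mult n A B (unit_coord k) x = (\<lambda>m. x n * eacp_basis_prod n A B k n m)"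
proof
  fix m
  have "eacp_mult n A B (unit_coord k) x m
      = (\<Sum>j\<le>n. if j = k then (\<Sum>l\<le>n. x l * eacp_basis_prod n A B j l m) else 0)"
    unfolding eacp_mult_def unit_coord_def by (intro sum.cong) auto
  also have "\<dots> = (\<Sum>l\<le>n. x l * eacp_basis_prod n A B k l m)"
    using assms by simp
  also have "\<dots> = (\<Sum>l\<le>n. if l = n then x n * eacp_basis_prod n A B k n m else 0)"
    using assms by (intro sum.cong) (auto simp: eacp_basis_prod_def)
  also have "\<dots> = x n * eacp_basis_prod n A B k n m"
    by simp
  finally show "eacp_mult n A B (unit_coord k) x m = x n * eacp_basis_prod n A B k n m" .
qed

lemma eacp_carrier_not_a_line:
  fixes w :: "nat \<Rightarrow> 'a::field"
  assumes "n \<ge> 1"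
  shows "\<exists>b\<in>eacp_carrier n. \<forall>c. b \<noteq> (\<lambda>m. c * w m)"
proof (cases "w 0 = 0")
  case True
  then have "\<forall>c. unit_coord 0 \<noteq> (\<lambda>m. c * w m)"
    by (auto simp: unit_coord_def fun_eq_iff)
  then show ?thesis
    using unit_coord_in_eacp_carrier[of 0 n] by blast
next
  case False
  have "unit_coord 1 \<noteq> (\<lambda>m. c * w m)" for c
  proof
    assume "unit_coord 1 = (\<lambda>m. c * w m)"
    then have "c * w 0 = 0" and "c * w 1 = 1"
      by (metis unit_coord_def zero_neq_one)+
    with False show False by simp
  qed
  then show ?thesis
    using unit_coord_in_eacp_carrier[OF assms] by blast
qed

theorem mainTheorem6:
  fixes n :: nat and A :: "nat \<Rightarrow> nat \<Rightarrow> 'a::field" and B :: "nat \<Rightarrow> 'a"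
  assumes "(2::'a) \<noteq> 0" and "n \<ge> 1"
  shows "\<exists>a\<in>eacp_carrier n. \<exists>b\<in>eacp_carrier n. a \<noteq> (\<lambda>_. 0) \<and>
           \<not> (\<exists>x\<in>eacp_carrier n. eacp_mult n A B a x = b)"
proof -
  obtain b where b: "b \<in> eacp_carrier n"
    and not_multiple: "\<forall>c. b \<noteq> (\<lambda>m. c * eacp_basis_prod n A B 0 n m)"
    using eacp_carrier_not_a_line[OF assms(2)] by blast
  have "\<not> (\<exists>x. eacp_mult n A B (unit_coord 0) x = b)"
    using not_multiple eacp_mult_unit_coord_left[of 0 n] assms(2) by auto
  then show ?thesis
    using b unit_coord_in_eacp_carrier[of 0 n] unit_coord_nonzero[of 0] by blast
qed

end
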